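(* Let $\mathcal{X}\subseteq\mathbb{R}^d$ be finite, $\mathcal{U}\subseteq\mathbb{R}^d$ a finite set of distinct centers and $\pi:\mathcal{X}\to\mathcal{U}$ any assignment. Let $T$ be the threshold tree output by the Random Thresholds algorithm on $\mathcal{U}$. Then $$\mathbb{E}[\operatorname{cost}_1(\pi_T,\mathcal{U})]\le\alpha(|\mathcal{U}|)\cdot\operatorname{cost}_1(\pi,\mathcal{U}).$$ Therefore the price of explainability for $k$-medians is at most $\alpha(k)$.
   Context: $\operatorname{cost}_1(\sigma,\mathcal{U})=\sum_{x\in\mathcal{X}}\|x-\sigma(x)\|_1$. Threshold trees: rooted binary trees whose internal nodes carry cuts $(i,\theta)$, root region $\mathbb{R}^d$, children regions $B_u\cap\{x_i\le\theta\}$ and $B_u\cap\{x_i>\theta\}$; a tree separates $\mathcal{U}$ if each leaf region contains exactly one center, and then $\pi_T$ maps each point to the center in its leaf region. Random Thresholds algorithm on a finite set $U$ of distinct points (with a fixed box $[a,b]^d$ containing all relevant points): start with the one-node tree; while the leaves do not separate $U$, pick $i\in[d]$ and $\theta\in[a,b]$ independently uniformly at random, and split every leaf $u$ for which $(i,\theta)$ separates some pair of points of $U$ in $B_u$. Closest Point Process: for a set $U\subseteq\mathbb{R}^d$ of $k$ distinct points with $\min_{p\in U}\|p\|_1=1$, run Random Thresholds on $U$, let $\widehat p$ be the unique point of $U$ in the leaf region containing the origin, and let $f(U)=\mathbb{E}[\|\widehat p\|_1]$. Define $\alpha(k)=\max\{f(U): |U|=k\}$ (over all $d$ and all such $U$).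 The price of explainability for $k$-medians is the supremum over finite $\mathcal{X}$ of (minimum $k$-medians cost of a clustering induced by a threshold tree with $k$ leaves)/(optimal $k$-medians cost). *)

theory Defs
  imports "HOL-Probability.Probability"
begin

text \<open>Points of R^d are represented as functions nat => real vanishing at coordinates >= d.\<close>

definition pts :: "nat \<Rightarrow> (nat \<Rightarrow> real) set" where
  "pts d = {x. \<forall>i\<ge>d. x i = 0}"

definition norm1 :: "nat \<Rightarrow> (nat \<Rightarrow> real) \<Rightarrow> real" where
  "norm1 d x = (\<Sum>i<d. \<bar>x i\<bar>)"

definition dist1 :: "nat \<Rightarrow> (nat \<Rightarrow> real) \<Rightarrow> (nat \<Rightarrow> real) \<Rightarrow> real" where
  "dist1 d x y = norm1 d (\<lambda>i. x i - y i)"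

definition cost1 :: "nat \<Rightarrow> ((nat \<Rightarrow> real) \<Rightarrow> (nat \<Rightarrow> real)) \<Rightarrow> (nat \<Rightarrow> real) set \<Rightarrow> real" where
  "cost1 d \<sigma> X = (\<Sum>x\<in>X. dist1 d x (\<sigma> x))"

definition in_box :: "nat \<Rightarrow> real \<Rightarrow> real \<Rightarrow> (nat \<Rightarrow> real) \<Rightarrow> bool" where
  "in_box d a b x \<longleftrightarrow> (\<forall>i<d. a \<le> x i \<and> x i \<le> b)"

text \<open>Random Thresholds: an i.i.d. sequence of cuts (i, theta), i uniform in [d], theta uniform in [a,b].\<close>
definition cutM :: "nat \<Rightarrow> real \<Rightarrow> real \<Rightarrow> (nat \<times> real) measure" where
  "cutM d a b = uniform_count_measure {..<d} \<Otimes>\<^sub>M uniform_measure lborel {a..b}"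

definition cutsM :: "nat \<Rightarrow> real \<Rightarrow> real \<Rightarrow> (nat \<Rightarrow> nat \<times> real) measure" where
  "cutsM d a b = PiM (UNIV :: nat set) (\<lambda>_. cutM d a b)"

definition separates :: "nat \<times> real \<Rightarrow> (nat \<Rightarrow> real) set \<Rightarrow> bool" where
  "separates c S \<longleftrightarrow> (\<exists>p\<in>S. \<exists>q\<in>S. p (fst c) \<le> snd c \<and> snd c < q (fst c))"

text \<open>Effect of one cut on the set of centers lying in the leaf region containing x:
  the leaf is split iff the cut separates two of its centers, and x goes to its side.\<close>
definition refine :: "nat \<times> real \<Rightarrow> (nat \<Rightarrow> real) \<Rightarrow> (nat \<Rightarrow> real) set \<Rightarrow> (nat \<Rightarrow> real) set" where
  "refine c x S = (if separates c S
     then {p\<in>S. (p (fst c) \<le> snd c) = (x (fst c) \<le> snd c)} else S)"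

primrec region_centers :: "(nat \<Rightarrow> nat \<times> real) \<Rightarrow> (nat \<Rightarrow> real) \<Rightarrow> (nat \<Rightarrow> real) set \<Rightarrow> nat \<Rightarrow> (nat \<Rightarrow> real) set" where
  "region_centers \<omega> x U 0 = U"
| "region_centers \<omega> x U (Suc n) = refine (\<omega> n) x (region_centers \<omega> x U n)"

text \<open>pi_T(x): the center in the final leaf region containing x (defined arbitrarily on the
  null event that the process never isolates a center).\<close>
definition leaf_center :: "(nat \<Rightarrow> nat \<times> real) \<Rightarrow> (nat \<Rightarrow> real) \<Rightarrow> (nat \<Rightarrow> real) set \<Rightarrow> (nat \<Rightarrow> real)" where
  "leaf_center \<omega> x U = (if \<exists>n p. region_centers \<omega> x U n = {p}
     then (THE p. \<exists>n. region_centers \<omega> x U n = {p}) else (SOME p. p \<in> U))"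

definition expected_RT_cost :: "nat \<Rightarrow> real \<Rightarrow> real \<Rightarrow> (nat \<Rightarrow> real) set \<Rightarrow> (nat \<Rightarrow> real) set \<Rightarrow> real" where
  "expected_RT_cost d a b U X = (\<integral>\<omega>. cost1 d (\<lambda>x. leaf_center \<omega> x U) X \<partial>cutsM d a b)"

definition closest_point_value :: "nat \<Rightarrow> real \<Rightarrow> real \<Rightarrow> (nat \<Rightarrow> real) set \<Rightarrow> real" where
  "closest_point_value d a b U = (\<integral>\<omega>. norm1 d (leaf_center \<omega> (\<lambda>_. 0) U) \<partial>cutsM d a b)"

definition alpha :: "nat \<Rightarrow> ereal" where
  "alpha k = (SUP (d, a, b, U) \<in> {(d, a, b, U). 0 < d \<and> a < b \<and> finite U \<and> U \<noteq> {} \<and>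
       U \<subseteq> pts d \<and> card U = k \<and> Min (norm1 d ` U) = 1 \<and>
       (\<forall>p\<in>U. in_box d a b p) \<and> in_box d a b (\<lambda>_. 0)}.
     ereal (closest_point_value d a b U))"

datatype ttree = Leaf | Node nat real ttree ttree

primrec leaves :: "ttree \<Rightarrow> nat" where
  "leaves Leaf = 1"
| "leaves (Node i t l r) = leaves l + leaves r"

primrec cuts_ok :: "nat \<Rightarrow> ttree \<Rightarrow> bool" where
  "cuts_ok d Leaf = True"
| "cuts_ok d (Node i t l r) = (i < d \<and> cuts_ok d l \<and> cuts_ok d r)"

primrec leaf_of :: "ttree \<Rightarrow> (nat \<Rightarrow> real) \<Rightarrow> bool list" where
  "leaf_of Leaf x = []"
| "leaf_of (Node i t l r) x = (if x i \<le> t then False # leaf_of l x else True # leaf_of r x)"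

definition tree_cost :: "nat \<Rightarrow> ttree \<Rightarrow> (nat \<Rightarrow> real) set \<Rightarrow> real" where
  "tree_cost d T X = (\<Sum>C\<in>(\<lambda>x. {y\<in>X. leaf_of T y = leaf_of T x}) ` X.
      Inf ((\<lambda>c. \<Sum>y\<in>C. dist1 d y c) ` pts d))"

definition kmed_opt :: "nat \<Rightarrow> nat \<Rightarrow> (nat \<Rightarrow> real) set \<Rightarrow> real" where
  "kmed_opt d k X = Inf {(\<Sum>x\<in>X. Min (dist1 d x ` U)) | U. U \<subseteq> pts d \<and> finite U \<and> card U = k}"

definition price_of_explainability :: "nat \<Rightarrow> ereal" where
  "price_of_explainability k = (SUP (d, X) \<in> {(d, X). 0 < d \<and> finite X \<and> X \<subseteq> pts d}.
     (INF T \<in> {T. cuts_ok d T \<and> leaves T = k}. ereal (tree_cost d T X)) / ereal (kmed_opt d k X))"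

end

(*
  Fix a point x and follow the leaf containing it. Cuts that separate no two centers of that leaf
  leave it unchanged, so the expected value of any function of the final center of x is determined
  by a recursion over the separating cuts only. Translating x to the origin and scaling by
  m = min_p ||x - p||_1 maps separating cuts onto separating cuts and multiplies the numerator and
  the denominator of the recursion by the same Jacobian; hence E ||x - pi_T(x)||_1 = m f(U') for the
  normalised centers U', which is at most alpha(|U|) ||x - pi(x)||_1. Summing over X bounds the
  expected cost.

  For the price of explainability, take optimal centers with the nearest-center assignment. Almost
  surely every center is eventually isolated, and some such cut sequence costs at most the
  expectation; its first cuts form a threshold tree with exactly k leaves whose induced clustering
  is no more expensive.
*)

theory Submission
  imports Defs
begin

lemma refine_subset: "refine c x S \<subseteq> S"
  by (auto simp: refine_def)

lemma finite_refine: "finite S \<Longrightarrow> finite (refine c x S)"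
  by (rule finite_subset[OF refine_subset])

lemma refine_nonempty: "S \<noteq> {} \<Longrightarrow> refine c x S \<noteq> {}"
  unfolding refine_def separates_def by (cases "x (fst c) \<le> snd c") auto

lemma refine_psubset: "separates c S \<Longrightarrow> refine c x S \<subset> S"
  unfolding refine_def separates_def by (cases "x (fst c) \<le> snd c") force+

lemma refine_not_separates: "\<not> separates c S \<Longrightarrow> refine c x S = S"
  unfolding refine_def by auto

lemma refine_separates:
  "separates c S \<Longrightarrow> refine c x S = {p\<in>S. (p (fst c) \<le> snd c) = (x (fst c) \<le> snd c)}"
  unfolding refine_def by auto

lemma self_in_refine: "x \<in> S \<Longrightarrow> x \<in> refine c x S"
  unfolding refine_def by auto

lemma refine_of_member: "y \<in> refine c x S \<Longrightarrow> refine c y S = refine c x S"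
  unfolding refine_def by (auto split: if_splits)

lemma region_centers_subset: "region_centers \<omega> x S n \<subseteq> S"
  by (induction n) (use refine_subset in fastforce)+

lemma region_centers_nonempty: "S \<noteq> {} \<Longrightarrow> region_centers \<omega> x S n \<noteq> {}"
  by (induction n) (auto simp: refine_nonempty)

lemma region_centers_antimono: "n \<le> m \<Longrightarrow> region_centers \<omega> x S m \<subseteq> region_centers \<omega> x S n"
  by (induction m rule: dec_induct) (use refine_subset in fastforce)+

lemma region_centers_Suc_shift:
  "region_centers \<omega> x S (Suc n) = region_centers (\<lambda>k. \<omega> (Suc k)) x (refine (\<omega> 0) x S) n"
  by (induction n) auto

lemma self_in_region_centers: "x \<in> S \<Longrightarrow> x \<in> region_centers \<omega> x S n"
  by (induction n) (auto simp: self_in_refine)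

lemma region_centers_of_member:
  "p \<in> region_centers \<omega> x S n \<Longrightarrow> region_centers \<omega> p S n = region_centers \<omega> x S n"
proof (induction n)
  case (Suc n)
  then have "p \<in> region_centers \<omega> x S n"
    using refine_subset by fastforce
  with Suc show ?case
    using refine_of_member by fastforce
qed simp

lemma region_centers_singleton_stable:
  assumes "region_centers \<omega> x S n = {p}" "n \<le> m"
  shows "region_centers \<omega> x S m = {p}"
proof -
  have "S \<noteq> {}"
    using assms(1) region_centers_subset by blast
  then show ?thesis
    using region_centers_antimono[OF assms(2), of \<omega> x S] region_centers_nonempty assms(1)
    by (metis subset_singleton_iff)
qed

lemma region_centers_singleton_unique:
  assumes "region_centers \<omega> x S n = {p}" "region_centers \<omega> x S m = {q}"
  shows "p = q"
  using region_centers_singleton_stable[OF assms(1), of "max n m"]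
    region_centers_singleton_stable[OF assms(2), of "max n m"] by simp

definition isolates :: "(nat \<Rightarrow> nat \<times> real) \<Rightarrow> (nat \<Rightarrow> real) \<Rightarrow> (nat \<Rightarrow> real) set \<Rightarrow> bool" where
  "isolates \<omega> x S \<longleftrightarrow> (\<exists>n p. region_centers \<omega> x S n = {p})"

definition final_center :: "(nat \<Rightarrow> nat \<times> real) \<Rightarrow> (nat \<Rightarrow> real) \<Rightarrow> (nat \<Rightarrow> real) set \<Rightarrow> nat \<Rightarrow> real" where
  "final_center \<omega> x S = (THE p. \<exists>n. region_centers \<omega> x S n = {p})"

lemma final_center_eq: "region_centers \<omega> x S n = {p} \<Longrightarrow> final_center \<omega> x S = p"
  unfolding final_center_def by (rule the_equality) (auto dest: region_centers_singleton_unique)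

lemma isolatesE:
  assumes "isolates \<omega> x S"
  obtains n where "region_centers \<omega> x S n = {final_center \<omega> x S}"
  using assms final_center_eq unfolding isolates_def by metis

lemma isolates_iff: "isolates \<omega> x S \<longleftrightarrow> (\<exists>n. \<exists>p\<in>S. region_centers \<omega> x S n = {p})"
  unfolding isolates_def using region_centers_subset by blast

lemma leaf_center_eq_final_center: "isolates \<omega> x S \<Longrightarrow> leaf_center \<omega> x S = final_center \<omega> x S"
  unfolding leaf_center_def final_center_def isolates_def by simp

lemma leaf_center_eq: "region_centers \<omega> x S n = {p} \<Longrightarrow> leaf_center \<omega> x S = p"
  using leaf_center_eq_final_center final_center_eq isolates_def by metis

lemma region_centers_singleton_shift:
  "(\<exists>n. region_centers \<omega> x S n = {p}) \<longleftrightarrow>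
   (\<exists>n. region_centers (\<lambda>k. \<omega> (Suc k)) x (refine (\<omega> 0) x S) n = {p})"
  using region_centers_singleton_stable[of \<omega> x S _ p "Suc _"]
  by (metis le_SucI order_refl region_centers_Suc_shift)

lemma isolates_Suc_shift:
  "isolates \<omega> x S \<longleftrightarrow> isolates (\<lambda>k. \<omega> (Suc k)) x (refine (\<omega> 0) x S)"
  unfolding isolates_def using region_centers_singleton_shift by blast

lemma final_center_Suc_shift:
  "final_center \<omega> x S = final_center (\<lambda>k. \<omega> (Suc k)) x (refine (\<omega> 0) x S)"
  unfolding final_center_def using region_centers_singleton_shift by presburger

section \<open>The distribution of the cuts\<close>

lemma sets_cutM: "sets (cutM d a b) = sets (count_space {..<d} \<Otimes>\<^sub>M borel)"
  unfolding cutM_def by (rule sets_pair_measure_cong) (simp_all add: sets_uniform_count_measure)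

lemma measurable_cutM_coordinatewise:
  assumes "\<And>i. i < d \<Longrightarrow> (\<lambda>\<theta>. f (i, \<theta>)) \<in> measurable borel K"
  shows "f \<in> measurable (cutM d a b) K"
  unfolding measurable_cong_sets[OF sets_cutM refl]
  by (rule measurable_pair_measure_countable1) (use assms in auto)

lemma measurable_Pair_cutM: "i < d \<Longrightarrow> (\<lambda>\<theta>. (i, \<theta>)) \<in> measurable borel (cutM d a b)"
  unfolding measurable_cong_sets[OF refl sets_cutM] by (rule measurable_Pair) auto

lemma space_cutsM: "space (cutsM d a b) = {\<omega>. \<forall>n. \<omega> n \<in> {..<d} \<times> UNIV}"
  unfolding cutsM_def cutM_def
  by (auto simp: space_PiM space_pair_measure space_uniform_count_measure PiE_def Pi_def)

lemma measurable_cutsM_component [measurable]: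
  "(\<lambda>\<omega>. \<omega> n) \<in> measurable (cutsM d a b) (cutM d a b)"
  unfolding cutsM_def by (rule measurable_component_singleton) simp

lemma prob_space_cutM: "0 < d \<Longrightarrow> a < b \<Longrightarrow> prob_space (cutM d a b)"
  unfolding cutM_def
  by (intro prob_space_pair prob_space_uniform_count_measure prob_space_uniform_measure) auto

lemma sequence_space_cutM: "0 < d \<Longrightarrow> a < b \<Longrightarrow> sequence_space (cutM d a b)"
  unfolding sequence_space_def product_prob_space_def product_prob_space_axioms_def
    product_sigma_finite_def
  using prob_space_cutM prob_space_imp_sigma_finite by auto

lemma prob_space_cutsM: "0 < d \<Longrightarrow> a < b \<Longrightarrow> prob_space (cutsM d a b)"
  unfolding cutsM_def by (intro prob_space_PiM prob_space_cutM)

lemma pred_separates: "finite S \<Longrightarrow> Measurable.pred borel (\<lambda>\<theta>::real. separates (i, \<theta>) S)"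
  unfolding separates_def by measurable

lemma pred_refine_eq:
  assumes "finite S"
  shows "Measurable.pred (cutM d a b) (\<lambda>c. refine c x S = T)"
proof (rule measurable_cutM_coordinatewise)
  fix i
  have [measurable]: "Measurable.pred borel (\<lambda>\<theta>. separates (i, \<theta>) S)"
    using assms by (rule pred_separates)
  have "refine (i, \<theta>) x S = T \<longleftrightarrow>
      (if separates (i, \<theta>) S then T \<subseteq> S \<and> (\<forall>p\<in>S. p \<in> T \<longleftrightarrow> (p i \<le> \<theta>) = (x i \<le> \<theta>))
       else S = T)" for \<theta>
    unfolding refine_def by auto
  then show "Measurable.pred borel (\<lambda>\<theta>. refine (i, \<theta>) x S = T)"
    using assms by simp
qed

lemma measurable_fun_refine:
  fixes g :: "(nat \<Rightarrow> real) set \<Rightarrow> real"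
  assumes "finite S"
  shows "(\<lambda>c. g (refine c x S)) \<in> borel_measurable (cutM d a b)"
proof -
  have [measurable]: "Measurable.pred (cutM d a b) (\<lambda>c. refine c x S = T)" for T
    using assms by (rule pred_refine_eq)
  have "g (refine c x S) = (\<Sum>T\<in>Pow S. if refine c x S = T then g T else 0)" for c
    using assms refine_subset by simp
  then show ?thesis
    by (simp only:) measurable
qed

lemma pred_region_centers_eq:
  assumes "finite S"
  shows "Measurable.pred (cutsM d a b) (\<lambda>\<omega>. region_centers \<omega> x S n = T)"
proof (induction n arbitrary: T)
  case (Suc n)
  have [measurable]: "Measurable.pred (cutM d a b) (\<lambda>c. refine c x T' = T)" if "T' \<in> Pow S" for T'
    using that assms by (intro pred_refine_eq) (auto intro: finite_subset)
  have [measurable]: "Measurable.pred (cutsM d a b) (\<lambda>\<omega>. region_centers \<omega> x S n = T')" for T'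
    by (rule Suc.IH)
  have "region_centers \<omega> x S (Suc n) = T \<longleftrightarrow>
      (\<exists>T'\<in>Pow S. region_centers \<omega> x S n = T' \<and> refine (\<omega> n) x T' = T)" for \<omega>
    using region_centers_subset by auto
  then show ?case
    by (simp only:) (intro pred_intros_finite, use assms in auto)
qed simp

lemma pred_isolates:
  assumes "finite S"
  shows "Measurable.pred (cutsM d a b) (\<lambda>\<omega>. isolates \<omega> x S)"
proof -
  have [measurable]: "Measurable.pred (cutsM d a b) (\<lambda>\<omega>. region_centers \<omega> x S n = {p})" for n p
    using assms by (rule pred_region_centers_eq)
  show ?thesis
    unfolding isolates_iff using assms by measurable
qed

lemma integral_uniform_measure_Icc:
  fixes f :: "real \<Rightarrow> real"
  assumes "a < b" "f \<in> borel_measurable borel"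
  shows "integral\<^sup>L (uniform_measure lborel {a..b}) f =
    (\<integral>\<theta>. indicator {a..b} \<theta> * f \<theta> \<partial>lborel) / (b - a)"
proof -
  have "(\<lambda>\<theta>. indicator {a..b} \<theta> / emeasure lborel {a..b}) = (\<lambda>\<theta>. ennreal (indicator {a..b} \<theta> / (b - a)))"
    using assms(1)
    by (auto simp: indicator_def divide_ennreal[symmetric] ennreal_1[symmetric] simp del: ennreal_1)
  then have "uniform_measure lborel {a..b} = density lborel (\<lambda>\<theta>. ennreal (indicator {a..b} \<theta> / (b - a)))"
    unfolding uniform_measure_def by simp
  also have "integral\<^sup>L \<dots> f = (\<integral>\<theta>. (indicator {a..b} \<theta> / (b - a)) *\<^sub>R f \<theta> \<partial>lborel)"
    using assms by (intro integral_density) auto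
  finally show ?thesis
    by (simp flip: integral_divide_zero)
qed

lemma integral_cutM:
  assumes "0 < d" "a < b" "G \<in> borel_measurable (cutM d a b)" "\<And>c. \<bar>G c\<bar> \<le> B"
  shows "integral\<^sup>L (cutM d a b) G =
    (\<Sum>i<d. \<integral>\<theta>. indicator {a..b} \<theta> * G (i, \<theta>) \<partial>lborel) / (d * (b - a))"
proof -
  let ?UC = "uniform_count_measure {..<d}" and ?UM = "uniform_measure lborel {a..b}"
  interpret pair_sigma_finite ?UC ?UM
    unfolding pair_sigma_finite_def using assms(1,2)
    by (auto intro!: prob_space_imp_sigma_finite prob_space_uniform_count_measure prob_space_uniform_measure)
  interpret P: prob_space "cutM d a b"
    using assms(1,2) by (rule prob_space_cutM)
  have "integrable (?UC \<Otimes>\<^sub>M ?UM) G"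
    unfolding cutM_def[symmetric] using assms(3,4) by (intro P.integrable_const_bound[where B = B]) auto
  then have "integral\<^sup>L (cutM d a b) G = (\<Sum>i<d. \<integral>\<theta>. G (i, \<theta>) \<partial>?UM) / d"
    unfolding cutM_def by (simp add: integral_fst'[symmetric] integral_uniform_count_measure)
  also have "\<dots> = (\<Sum>i<d. (\<integral>\<theta>. indicator {a..b} \<theta> * G (i, \<theta>) \<partial>lborel) / (b - a)) / d"
    using measurable_compose[OF measurable_Pair_cutM assms(3)] assms(2)
    by (simp add: integral_uniform_measure_Icc)
  finally show ?thesis
    by (simp add: sum_divide_distrib mult.commute)
qed

text \<open>Unlike \<^const>\<open>leaf_center\<close>, whose arbitrary value on the null event that no center is
  isolated depends on the whole leaf, \<open>leaf_value\<close> vanishes there; this makes it commute with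
  dropping the first cut (\<open>leaf_value_case_nat\<close>).\<close>

definition leaf_value ::
  "((nat \<Rightarrow> real) \<Rightarrow> real) \<Rightarrow> (nat \<Rightarrow> real) \<Rightarrow> (nat \<Rightarrow> real) set \<Rightarrow> (nat \<Rightarrow> nat \<times> real) \<Rightarrow> real"
  where "leaf_value h x S \<omega> = (if isolates \<omega> x S then h (final_center \<omega> x S) else 0)"

definition expected_leaf_value ::
  "nat \<Rightarrow> real \<Rightarrow> real \<Rightarrow> (nat \<Rightarrow> real) \<Rightarrow> (nat \<Rightarrow> real) set \<Rightarrow> ((nat \<Rightarrow> real) \<Rightarrow> real) \<Rightarrow> real"
  where "expected_leaf_value d a b x S h = (\<integral>\<omega>. leaf_value h x S \<omega> \<partial>cutsM d a b)"

lemma leaf_value_eq_sum: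
  assumes "finite S"
  shows "leaf_value h x S \<omega> = (\<Sum>p\<in>S. if \<exists>n. region_centers \<omega> x S n = {p} then h p else 0)"
proof (cases "isolates \<omega> x S")
  case True
  then obtain n where n: "region_centers \<omega> x S n = {final_center \<omega> x S}"
    by (rule isolatesE)
  then have "final_center \<omega> x S \<in> S"
    using region_centers_subset by blast
  moreover have "(\<exists>n. region_centers \<omega> x S n = {p}) \<longleftrightarrow> p = final_center \<omega> x S" for p
    using n region_centers_singleton_unique by metis
  ultimately show ?thesis
    using True assms by (simp add: leaf_value_def)
qed (auto simp: leaf_value_def isolates_def)

lemma leaf_value_measurable:
  assumes "finite S"
  shows "leaf_value h x S \<in> borel_measurable (cutsM d a b)"
proof -
  have [measurable]: "Measurable.pred (cutsM d a b) (\<lambda>\<omega>. region_centers \<omega> x S n = {p})" for n p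
    using assms by (rule pred_region_centers_eq)
  show ?thesis
    unfolding leaf_value_eq_sum[OF assms, abs_def] by measurable
qed

lemma abs_leaf_value_le: "finite S \<Longrightarrow> \<bar>leaf_value h x S \<omega>\<bar> \<le> (\<Sum>p\<in>S. \<bar>h p\<bar>)"
  by (force simp: leaf_value_eq_sum intro: order_trans[OF sum_abs] sum_mono)

lemma integrable_leaf_value:
  assumes "0 < d" "a < b" "finite S"
  shows "integrable (cutsM d a b) (leaf_value h x S)"
proof -
  interpret prob_space "cutsM d a b"
    using assms(1,2) by (rule prob_space_cutsM)
  show ?thesis
    using abs_leaf_value_le[OF assms(3)] leaf_value_measurable[OF assms(3)]
    by (intro integrable_const_bound) auto
qed

lemma abs_expected_leaf_value_le:
  assumes "0 < d" "a < b" "finite S"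
  shows "\<bar>expected_leaf_value d a b x S h\<bar> \<le> (\<Sum>p\<in>S. \<bar>h p\<bar>)"
proof -
  interpret prob_space "cutsM d a b"
    using assms(1,2) by (rule prob_space_cutsM)
  have "\<bar>expected_leaf_value d a b x S h\<bar> \<le> (\<integral>\<omega>. \<bar>leaf_value h x S \<omega>\<bar> \<partial>cutsM d a b)"
    unfolding expected_leaf_value_def by (rule integral_abs_bound)
  also have "\<dots> \<le> (\<Sum>p\<in>S. \<bar>h p\<bar>)"
    using abs_leaf_value_le[OF assms(3)] leaf_value_measurable[OF assms(3)]
    by (intro integral_le_const integrable_abs integrable_leaf_value assms) auto
  finally show ?thesis .
qed

lemma abs_expected_leaf_value_refine_le:
  assumes "0 < d" "a < b" "finite S"
  shows "\<bar>expected_leaf_value d a b x (refine c x S) h\<bar> \<le> (\<Sum>p\<in>S. \<bar>h p\<bar>)"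
proof -
  have "\<bar>expected_leaf_value d a b x (refine c x S) h\<bar> \<le> (\<Sum>p\<in>refine c x S. \<bar>h p\<bar>)"
    using assms(1,2) finite_refine[OF assms(3)] by (rule abs_expected_leaf_value_le)
  also have "\<dots> \<le> (\<Sum>p\<in>S. \<bar>h p\<bar>)"
    using assms(3) refine_subset by (intro sum_mono2) auto
  finally show ?thesis .
qed

lemma leaf_value_case_nat: "leaf_value h x S (case_nat s \<omega>) = leaf_value h x (refine s x S) \<omega>"
  using isolates_Suc_shift[of "case_nat s \<omega>"] final_center_Suc_shift[of "case_nat s \<omega>"]
  by (simp add: leaf_value_def)

text \<open>The first cut is independent of the remaining ones, which are again distributed as \<^const>\<open>cutsM\<close>.\<close>

lemma expected_leaf_value_first_cut:
  assumes "0 < d" "a < b" "finite S"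
  shows "expected_leaf_value d a b x S h = (\<integral>c. expected_leaf_value d a b x (refine c x S) h \<partial>cutM d a b)"
proof -
  let ?M = "cutM d a b" and ?Ms = "cutsM d a b"
  interpret sequence_space ?M
    using assms(1,2) by (rule sequence_space_cutM)
  interpret PS: pair_sigma_finite ?M ?Ms
    unfolding pair_sigma_finite_def using assms(1,2)
    by (auto intro!: prob_space_imp_sigma_finite prob_space_cutM prob_space_cutsM)
  interpret PP: prob_space "?M \<Otimes>\<^sub>M ?Ms"
    using assms(1,2) by (intro prob_space_pair prob_space_cutM prob_space_cutsM)
  have [measurable]: "leaf_value h x S \<in> borel_measurable ?Ms"
    using assms(3) by (rule leaf_value_measurable)
  have [measurable]: "(\<lambda>(s, \<omega>). case_nat s \<omega>) \<in> ?M \<Otimes>\<^sub>M ?Ms \<rightarrow>\<^sub>M ?Ms"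
    unfolding cutsM_def by measurable
  have integrable: "integrable (?M \<Otimes>\<^sub>M ?Ms) (\<lambda>(s, \<omega>). leaf_value h x S (case_nat s \<omega>))"
    using abs_leaf_value_le[OF assms(3)] by (intro PP.integrable_const_bound[where B = "\<Sum>p\<in>S. \<bar>h p\<bar>"]) auto
  have "expected_leaf_value d a b x S h =
      integral\<^sup>L (distr (?M \<Otimes>\<^sub>M ?Ms) ?Ms (\<lambda>(s, \<omega>). case_nat s \<omega>)) (leaf_value h x S)"
    unfolding expected_leaf_value_def cutsM_def PiM_iter ..
  also have "\<dots> = (\<integral>(s, \<omega>). leaf_value h x S (case_nat s \<omega>) \<partial>(?M \<Otimes>\<^sub>M ?Ms))"
    by (simp add: integral_distr case_prod_beta')
  also have "\<dots> = (\<integral>s. \<integral>\<omega>. leaf_value h x S (case_nat s \<omega>) \<partial>?Ms \<partial>?M)"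
    using PS.integral_fst'[OF integrable] by simp
  finally show ?thesis
    by (simp add: expected_leaf_value_def leaf_value_case_nat)
qed

definition sep_integral :: "nat \<Rightarrow> (nat \<Rightarrow> real) set \<Rightarrow> (nat \<times> real \<Rightarrow> real) \<Rightarrow> real" where
  "sep_integral d S F = (\<Sum>i<d. \<integral>\<theta>. (if separates (i, \<theta>) S then F (i, \<theta>) else 0) \<partial>lborel)"

lemma sep_integral_cong:
  assumes "\<And>i \<theta>. i < d \<Longrightarrow> separates (i, \<theta>) S \<Longrightarrow> F (i, \<theta>) = G (i, \<theta>)"
  shows "sep_integral d S F = sep_integral d S G"
  unfolding sep_integral_def
  by (intro sum.cong refl Bochner_Integration.integral_cong) (use assms in auto)

lemma separates_in_box:
  assumes "separates (i, \<theta>) S" "\<forall>p\<in>S. in_box d a b p" "i < d"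
  shows "\<theta> \<in> {a..b}"
  using assms unfolding separates_def in_box_def by force

lemma integrable_separating:
  fixes g :: "real \<Rightarrow> real"
  assumes "finite S" "\<forall>p\<in>S. in_box d a b p" "i < d"
    and g: "g \<in> borel_measurable borel" "\<And>\<theta>. \<bar>g \<theta>\<bar> \<le> B"
  shows "integrable lborel (\<lambda>\<theta>. if separates (i, \<theta>) S then g \<theta> else 0)"
proof (rule Bochner_Integration.integrable_bound)
  have [measurable]: "Measurable.pred borel (\<lambda>\<theta>. separates (i, \<theta>) S)"
    using assms(1) by (rule pred_separates)
  show "(\<lambda>\<theta>. if separates (i, \<theta>) S then g \<theta> else 0) \<in> borel_measurable lborel"
    using g(1) by measurable
  show "integrable lborel (\<lambda>\<theta>. B * indicator {a..b} \<theta> :: real)"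
    by (intro integrable_mult_right integrable_real_indicator) (auto simp: emeasure_lborel_Icc_eq)
  have "\<bar>if separates (i, \<theta>) S then g \<theta> else 0\<bar> \<le> B * indicator {a..b} \<theta>" for \<theta>
    using separates_in_box[OF _ assms(2,3), of \<theta>] g(2)[of \<theta>] by (auto simp: indicator_def)
  then show "AE \<theta> in lborel. norm (if separates (i, \<theta>) S then g \<theta> else 0) \<le> norm (B * indicator {a..b} \<theta>)"
    by (intro AE_I2) (metis abs_ge_self order_trans real_norm_def)
qed

lemma integral_indicator_split:
  fixes f :: "real \<Rightarrow> real"
  assumes "a \<le> b" "\<And>\<theta>. P \<theta> \<Longrightarrow> \<theta> \<in> {a..b}" "\<And>\<theta>. \<not> P \<theta> \<Longrightarrow> f \<theta> = V"
    and fP: "integrable lborel (\<lambda>\<theta>. if P \<theta> then f \<theta> else 0)"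
    and 1: "integrable lborel (\<lambda>\<theta>. if P \<theta> then 1 else 0 :: real)"
  shows "(\<integral>\<theta>. indicator {a..b} \<theta> * f \<theta> \<partial>lborel) =
    (\<integral>\<theta>. (if P \<theta> then f \<theta> else 0) \<partial>lborel) + ((b - a) - (\<integral>\<theta>. (if P \<theta> then 1 else 0) \<partial>lborel)) * V"
proof -
  have ind: "integrable lborel (indicator {a..b} :: real \<Rightarrow> real)"
    by (auto simp: emeasure_lborel_Icc_eq)
  have "indicator {a..b} \<theta> * f \<theta> =
      (if P \<theta> then f \<theta> else 0) + (indicator {a..b} \<theta> - (if P \<theta> then 1 else 0)) * V" for \<theta>
    using assms(2,3) by (cases "P \<theta>") (auto simp: algebra_simps)
  then have "(\<integral>\<theta>. indicator {a..b} \<theta> * f \<theta> \<partial>lborel) =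
      (\<integral>\<theta>. (if P \<theta> then f \<theta> else 0) \<partial>lborel) +
      ((\<integral>\<theta>. indicator {a..b} \<theta> \<partial>lborel) - (\<integral>\<theta>. (if P \<theta> then 1 else 0) \<partial>lborel)) * V"
    using fP 1 ind by simp
  then show ?thesis
    using assms(1) by simp
qed

text \<open>A cut that separates no two centers of the current leaf leaves it unchanged, so the expected
  value is the average of its values after the separating cuts only.\<close>

lemma expected_leaf_value_recursion:
  assumes d: "0 < d" and ab: "a < b" and S: "finite S" and box: "\<forall>p\<in>S. in_box d a b p"
  shows "expected_leaf_value d a b x S h * sep_integral d S (\<lambda>_. 1) =
    sep_integral d S (\<lambda>c. expected_leaf_value d a b x (refine c x S) h)"
proof -
  define V where "V = expected_leaf_value d a b x S h"
  define F where "F = (\<lambda>c. expected_leaf_value d a b x (refine c x S) h)"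
  define B where "B = (\<Sum>p\<in>S. \<bar>h p\<bar>)"
  define A where "A = (\<lambda>i. \<integral>\<theta>. (if separates (i, \<theta>) S then F (i, \<theta>) else 0) \<partial>lborel)"
  define C where "C = (\<lambda>i. \<integral>\<theta>. (if separates (i, \<theta>) S then 1 else 0 :: real) \<partial>lborel)"
  have F_measurable: "F \<in> borel_measurable (cutM d a b)"
    unfolding F_def using S by (rule measurable_fun_refine)
  have F_bounded: "\<bar>F c\<bar> \<le> B" for c
    unfolding F_def B_def using d ab S by (rule abs_expected_leaf_value_refine_le)
  have split: "(\<integral>\<theta>. indicator {a..b} \<theta> * F (i, \<theta>) \<partial>lborel) = A i + ((b - a) - C i) * V" if i: "i < d" for i
    unfolding A_def C_def
  proof (rule integral_indicator_split)
    show "\<theta> \<in> {a..b}" if "separates (i, \<theta>) S" for \<theta>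
      using that box i by (rule separates_in_box)
    show "F (i, \<theta>) = V" if "\<not> separates (i, \<theta>) S" for \<theta>
      using that unfolding F_def V_def by (simp add: refine_not_separates)
    show "integrable lborel (\<lambda>\<theta>. if separates (i, \<theta>) S then F (i, \<theta>) else 0)"
      using measurable_compose[OF measurable_Pair_cutM[OF i] F_measurable] F_bounded
      by (intro integrable_separating[OF S box i]) auto
    show "integrable lborel (\<lambda>\<theta>. if separates (i, \<theta>) S then 1 else 0 :: real)"
      by (rule integrable_separating[OF S box i, where B = 1]) auto
  qed (use ab in simp)
  have "V = integral\<^sup>L (cutM d a b) F"
    unfolding V_def F_def using d ab S by (rule expected_leaf_value_first_cut)
  also have "\<dots> = (\<Sum>i<d. \<integral>\<theta>. indicator {a..b} \<theta> * F (i, \<theta>) \<partial>lborel) / (d * (b - a))"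
    using d ab F_measurable F_bounded by (rule integral_cutM)
  also have "(\<Sum>i<d. \<integral>\<theta>. indicator {a..b} \<theta> * F (i, \<theta>) \<partial>lborel) = (\<Sum>i<d. A i + ((b - a) - C i) * V)"
    using split by (intro sum.cong) auto
  also have "\<dots> = (\<Sum>i<d. A i) + d * (b - a) * V - (\<Sum>i<d. C i) * V"
    by (simp add: sum.distrib sum_subtractf sum_distrib_right left_diff_distrib)
  finally have "V * (d * (b - a)) = (\<Sum>i<d. A i) + d * (b - a) * V - (\<Sum>i<d. C i) * V"
    using d ab by (simp add: eq_divide_eq)
  then have "V * (\<Sum>i<d. C i) = (\<Sum>i<d. A i)"
    by (simp add: algebra_simps)
  then show ?thesis
    unfolding sep_integral_def A_def C_def V_def F_def by simp
qed

lemma pts_neq_iff: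
  assumes "p \<in> pts d" "q \<in> pts d"
  shows "p \<noteq> q \<longleftrightarrow> (\<exists>i<d. p i \<noteq> q i)"
proof -
  have "p = q" if "\<forall>i<d. p i = q i"
  proof
    show "p i = q i" for i
      using that assms unfolding pts_def by (cases "i < d") auto
  qed
  then show ?thesis
    by auto
qed

lemma sep_integral_one_pos:
  assumes S: "finite S" "\<forall>p\<in>S. in_box d a b p" "S \<subseteq> pts d"
    and pq: "p \<in> S" "q \<in> S" "p \<noteq> q"
  shows "sep_integral d S (\<lambda>_. 1) > 0"
proof -
  obtain i where i: "i < d" "p i \<noteq> q i"
    using pq S(3) pts_neq_iff by blast
  obtain u v where uv: "u \<in> S" "v \<in> S" "u i < v i"
  proof (cases "p i < q i")
    case True
    then show ?thesis
      by (rule that[OF pq(1,2)])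
  next
    case False
    then show ?thesis
      using i(2) by (intro that[OF pq(2,1)]) simp
  qed
  define C where "C = (\<lambda>j. \<integral>\<theta>. (if separates (j, \<theta>) S then 1 else 0 :: real) \<partial>lborel)"
  have "0 < v i - u i"
    using uv by simp
  also have "v i - u i = (\<integral>\<theta>. indicator {u i..<v i} \<theta> \<partial>lborel)"
    using uv by simp
  also have "\<dots> \<le> C i"
    unfolding C_def
  proof (rule integral_mono)
    show "integrable lborel (\<lambda>\<theta>. if separates (i, \<theta>) S then 1 else 0 :: real)"
      by (rule integrable_separating[OF S(1,2) i(1), where B = 1]) auto
    show "indicator {u i..<v i} \<theta> \<le> (if separates (i, \<theta>) S then 1 else 0 :: real)" for \<theta>
      using uv unfolding separates_def by (auto simp: indicator_def)
  qed (use uv in auto)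
  also have "C i \<le> (\<Sum>j<d. C j)"
    unfolding C_def using i(1) by (intro member_le_sum Bochner_Integration.integral_nonneg) auto
  finally show ?thesis
    unfolding sep_integral_def C_def by simp
qed

lemma expected_leaf_value_eq_ratio:
  assumes "0 < d" "a < b" "finite S" "\<forall>p\<in>S. in_box d a b p" "S \<subseteq> pts d"
    and "p \<in> S" "q \<in> S" "p \<noteq> q"
  shows "expected_leaf_value d a b x S h =
    sep_integral d S (\<lambda>c. expected_leaf_value d a b x (refine c x S) h) / sep_integral d S (\<lambda>_. 1)"
  using expected_leaf_value_recursion[OF assms(1-4)] sep_integral_one_pos[OF assms(3-8)]
  by (simp add: eq_divide_eq)

lemma expected_leaf_value_singleton:
  assumes "0 < d" "a < b"
  shows "expected_leaf_value d a b x {p} h = h p"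
proof -
  interpret prob_space "cutsM d a b"
    using assms by (rule prob_space_cutsM)
  have "region_centers \<omega> x {p} 0 = {p}" for \<omega>
    by simp
  then have "leaf_value h x {p} \<omega> = h p" for \<omega>
    unfolding leaf_value_def isolates_def by (metis final_center_eq)
  then have "leaf_value h x {p} = (\<lambda>_. h p)"
    by (rule ext)
  then show ?thesis
    unfolding expected_leaf_value_def by (simp add: prob_space)
qed

lemma singleton_or_two_points:
  assumes "S \<noteq> {}"
  obtains p where "S = {p}" | p q where "p \<in> S" "q \<in> S" "p \<noteq> q"
proof (cases "\<exists>p q. p \<in> S \<and> q \<in> S \<and> p \<noteq> q")
  case False
  then show ?thesis
    using assms that(1) by blast
qed (use that(2) in blast)

section \<open>Invariance under translation and scaling\<close>

definition rescale :: "nat \<Rightarrow> (nat \<Rightarrow> real) \<Rightarrow> real \<Rightarrow> (nat \<Rightarrow> real) \<Rightarrow> (nat \<Rightarrow> real)" where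
  "rescale d x m p = (\<lambda>i. if i < d then (p i - x i) / m else 0)"

lemma rescale_in_pts: "rescale d x m p \<in> pts d"
  unfolding rescale_def pts_def by auto

lemma inj_on_rescale:
  assumes "m > 0"
  shows "inj_on (rescale d x m) (pts d)"
proof
  fix p q assume pq: "p \<in> pts d" "q \<in> pts d" "rescale d x m p = rescale d x m q"
  have "p i = q i" if "i < d" for i
    using fun_cong[OF pq(3), of i] that assms by (simp add: rescale_def)
  then show "p = q"
    using pts_neq_iff[OF pq(1,2)] by blast
qed

lemma rescale_le_iff:
  assumes "m > 0" "i < d"
  shows "rescale d x m p i \<le> (\<theta> - x i) / m \<longleftrightarrow> p i \<le> \<theta>"
    and "(\<theta> - x i) / m < rescale d x m p i \<longleftrightarrow> \<theta> < p i"
    and "0 \<le> (\<theta> - x i) / m \<longleftrightarrow> x i \<le> \<theta>"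
  using assms unfolding rescale_def by (auto simp: divide_le_cancel divide_less_cancel zero_le_divide_iff)

lemma separates_rescale_iff:
  assumes "m > 0" "i < d"
  shows "separates (i, (\<theta> - x i) / m) (rescale d x m ` S) \<longleftrightarrow> separates (i, \<theta>) S"
  unfolding separates_def using rescale_le_iff[OF assms] by auto

lemma refine_rescale:
  assumes "m > 0" "i < d"
  shows "refine (i, (\<theta> - x i) / m) (\<lambda>_. 0) (rescale d x m ` S) = rescale d x m ` refine (i, \<theta>) x S"
  using separates_rescale_iff[OF assms] rescale_le_iff[OF assms]
  by (cases "separates (i, \<theta>) S") (auto simp: refine_def)

lemma sep_integral_rescale:
  assumes m: "m > 0"
    and G: "\<And>i \<theta>. i < d \<Longrightarrow> separates (i, \<theta>) S \<Longrightarrow> G (i, \<theta>) = G' (i, (\<theta> - x i) / m)"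
  shows "sep_integral d (rescale d x m ` S) G' = sep_integral d S G / m"
proof -
  have "(\<integral>\<theta>. (if separates (i, \<theta>) S then G (i, \<theta>) else 0) \<partial>lborel) =
      m * (\<integral>\<theta>. (if separates (i, \<theta>) (rescale d x m ` S) then G' (i, \<theta>) else 0) \<partial>lborel)"
    if i: "i < d" for i
  proof -
    have "(\<lambda>\<theta>. if separates (i, x i + m * \<theta>) S then G (i, x i + m * \<theta>) else 0) =
        (\<lambda>\<theta>. if separates (i, \<theta>) (rescale d x m ` S) then G' (i, \<theta>) else 0)"
    proof
      fix \<theta>
      have "(x i + m * \<theta> - x i) / m = \<theta>"
        using m by simp
      then show "(if separates (i, x i + m * \<theta>) S then G (i, x i + m * \<theta>) else 0) =
          (if separates (i, \<theta>) (rescale d x m ` S) then G' (i, \<theta>) else 0)"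
        using separates_rescale_iff[OF m i, of "x i + m * \<theta>" x S] G[OF i, of "x i + m * \<theta>"] by simp
    qed
    then show ?thesis
      using lborel_integral_real_affine[of m "\<lambda>\<theta>. if separates (i, \<theta>) S then G (i, \<theta>) else 0" "x i"] m
      by simp
  qed
  then show ?thesis
    using m unfolding sep_integral_def by (simp add: sum_distrib_left[symmetric])
qed

text \<open>The cut \<open>(i, \<theta>)\<close> of the leaf of \<open>x\<close> corresponds to the cut \<open>(i, (\<theta> - x i) / m)\<close> of the
  rescaled leaf of the origin, so both sides satisfy the same recursion, with numerator and
  denominator scaled by \<open>1 / m\<close>.\<close>

lemma expected_leaf_value_rescale:
  assumes d: "0 < d" and ab: "a < b" "a' < b'" and m: "m > 0"
  shows "finite S \<Longrightarrow> S \<noteq> {} \<Longrightarrow> S \<subseteq> pts d \<Longrightarrow> \<forall>p\<in>S. in_box d a b p \<Longrightarrow>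
    \<forall>p\<in>S. in_box d a' b' (rescale d x m p) \<Longrightarrow> \<forall>p\<in>S. h p = h' (rescale d x m p) \<Longrightarrow>
    expected_leaf_value d a b x S h = expected_leaf_value d a' b' (\<lambda>_. 0) (rescale d x m ` S) h'"
proof (induction S rule: finite_psubset_induct)
  case (psubset S)
  let ?R = "rescale d x m"
  from \<open>S \<noteq> {}\<close> show ?case
  proof (cases rule: singleton_or_two_points)
    case (1 p)
    then show ?thesis
      using psubset.prems expected_leaf_value_singleton d ab by simp
  next
    case (2 p q)
    have "?R p \<noteq> ?R q"
      using 2 psubset.prems(2) inj_on_rescale[OF m, of d x] by (auto dest: inj_onD)
    then have ratio': "expected_leaf_value d a' b' (\<lambda>_. 0) (?R ` S) h' =
        sep_integral d (?R ` S) (\<lambda>c. expected_leaf_value d a' b' (\<lambda>_. 0) (refine c (\<lambda>_. 0) (?R ` S)) h') /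
        sep_integral d (?R ` S) (\<lambda>_. 1)"
      using 2 psubset.prems psubset.hyps rescale_in_pts
      by (intro expected_leaf_value_eq_ratio[OF d ab(2)]) auto
    have ratio: "expected_leaf_value d a b x S h =
        sep_integral d S (\<lambda>c. expected_leaf_value d a b x (refine c x S) h) / sep_integral d S (\<lambda>_. 1)"
      using 2 psubset.prems psubset.hyps by (intro expected_leaf_value_eq_ratio[OF d ab(1)]) auto
    have "expected_leaf_value d a b x (refine (i, \<theta>) x S) h =
        expected_leaf_value d a' b' (\<lambda>_. 0) (refine (i, (\<theta> - x i) / m) (\<lambda>_. 0) (?R ` S)) h'"
      if "i < d" "separates (i, \<theta>) S" for i \<theta>
      unfolding refine_rescale[OF m that(1)]
      using refine_psubset[OF that(2)] psubset.prems psubset.hyps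
      by (intro psubset.IH finite_refine refine_nonempty) (auto dest!: subsetD[OF refine_subset])
    then have "sep_integral d (?R ` S) (\<lambda>c. expected_leaf_value d a' b' (\<lambda>_. 0) (refine c (\<lambda>_. 0) (?R ` S)) h') =
        sep_integral d S (\<lambda>c. expected_leaf_value d a b x (refine c x S) h) / m"
      by (intro sep_integral_rescale[OF m]) auto
    moreover have "sep_integral d (?R ` S) (\<lambda>_. 1) = sep_integral d S (\<lambda>_. 1) / m"
      by (rule sep_integral_rescale[OF m]) simp
    ultimately show ?thesis
      using m by (simp add: ratio ratio')
  qed
qed

lemma expected_leaf_value_one:
  assumes d: "0 < d" and ab: "a < b"
  shows "finite S \<Longrightarrow> S \<noteq> {} \<Longrightarrow> S \<subseteq> pts d \<Longrightarrow> \<forall>p\<in>S. in_box d a b p \<Longrightarrow>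
    expected_leaf_value d a b x S (\<lambda>_. 1) = 1"
proof (induction S rule: finite_psubset_induct)
  case (psubset S)
  from \<open>S \<noteq> {}\<close> show ?case
  proof (cases rule: singleton_or_two_points)
    case (1 p)
    then show ?thesis
      using expected_leaf_value_singleton d ab by simp
  next
    case (2 p q)
    have "expected_leaf_value d a b x (refine (i, \<theta>) x S) (\<lambda>_. 1) = 1"
      if "i < d" "separates (i, \<theta>) S" for i \<theta>
      using refine_psubset[OF that(2)] psubset.prems psubset.hyps
      by (intro psubset.IH finite_refine refine_nonempty) (auto dest!: subsetD[OF refine_subset])
    then have "sep_integral d S (\<lambda>c. expected_leaf_value d a b x (refine c x S) (\<lambda>_. 1)) =
        sep_integral d S (\<lambda>_. 1)"
      by (intro sep_integral_cong) auto
    moreover have "sep_integral d S (\<lambda>_. 1) > 0"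
      using 2 psubset.prems psubset.hyps by (intro sep_integral_one_pos) auto
    ultimately show ?thesis
      using 2 psubset.prems psubset.hyps by (subst expected_leaf_value_eq_ratio[OF d ab]) auto
  qed
qed

section \<open>Almost sure termination\<close>

lemma AE_isolates:
  assumes "0 < d" "a < b" "finite S" "S \<noteq> {}" "S \<subseteq> pts d" "\<forall>p\<in>S. in_box d a b p"
  shows "AE \<omega> in cutsM d a b. isolates \<omega> x S"
proof -
  interpret prob_space "cutsM d a b"
    using assms(1,2) by (rule prob_space_cutsM)
  have [measurable]: "Measurable.pred (cutsM d a b) (\<lambda>\<omega>. isolates \<omega> x S)"
    using assms(3) by (rule pred_isolates)
  have "1 = expected_leaf_value d a b x S (\<lambda>_. 1)"
    using expected_leaf_value_one[OF assms(1,2)] assms(3-6) by simp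
  also have "\<dots> = (\<integral>\<omega>. indicator {\<omega> \<in> space (cutsM d a b). isolates \<omega> x S} \<omega> \<partial>cutsM d a b)"
    unfolding expected_leaf_value_def leaf_value_def
    by (intro Bochner_Integration.integral_cong) (auto simp: indicator_def)
  also have "\<dots> = prob {\<omega> \<in> space (cutsM d a b). isolates \<omega> x S}"
    by simp
  finally have "AE \<omega> in cutsM d a b. \<omega> \<in> {\<omega> \<in> space (cutsM d a b). isolates \<omega> x S}"
    by (intro AE_prob_1) simp
  then show ?thesis
    by auto
qed

lemma leaf_center_split:
  "g (leaf_center \<omega> x S) = leaf_value g x S \<omega> + (if isolates \<omega> x S then 0 else g (SOME p. p \<in> S))"
  by (simp add: leaf_value_def leaf_center_eq_final_center) (simp add: leaf_center_def isolates_def)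

lemma leaf_center_measurable:
  fixes g :: "(nat \<Rightarrow> real) \<Rightarrow> real"
  assumes "finite S"
  shows "(\<lambda>\<omega>. g (leaf_center \<omega> x S)) \<in> borel_measurable (cutsM d a b)"
proof -
  have [measurable]: "Measurable.pred (cutsM d a b) (\<lambda>\<omega>. isolates \<omega> x S)"
    using assms by (rule pred_isolates)
  have [measurable]: "leaf_value g x S \<in> borel_measurable (cutsM d a b)"
    using assms by (rule leaf_value_measurable)
  show ?thesis
    unfolding leaf_center_split by measurable
qed

lemma integrable_leaf_center:
  fixes g :: "(nat \<Rightarrow> real) \<Rightarrow> real"
  assumes "0 < d" "a < b" "finite S"
  shows "integrable (cutsM d a b) (\<lambda>\<omega>. g (leaf_center \<omega> x S))"
proof -
  interpret prob_space "cutsM d a b"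
    using assms(1,2) by (rule prob_space_cutsM)
  have [measurable]: "Measurable.pred (cutsM d a b) (\<lambda>\<omega>. isolates \<omega> x S)"
    using assms(3) by (rule pred_isolates)
  have "integrable (cutsM d a b) (\<lambda>\<omega>. if isolates \<omega> x S then 0 else g (SOME p. p \<in> S))"
    by (rule integrable_const_bound[where B = "\<bar>g (SOME p. p \<in> S)\<bar>"]) (auto, measurable)
  then show ?thesis
    unfolding leaf_center_split by (intro Bochner_Integration.integrable_add integrable_leaf_value assms)
qed

lemma integral_leaf_center:
  fixes g :: "(nat \<Rightarrow> real) \<Rightarrow> real"
  assumes "0 < d" "a < b" "finite S" "S \<noteq> {}" "S \<subseteq> pts d" "\<forall>p\<in>S. in_box d a b p"
  shows "(\<integral>\<omega>. g (leaf_center \<omega> x S) \<partial>cutsM d a b) = expected_leaf_value d a b x S g"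
  unfolding expected_leaf_value_def
proof (rule integral_cong_AE)
  show "(\<lambda>\<omega>. g (leaf_center \<omega> x S)) \<in> borel_measurable (cutsM d a b)"
    using assms(3) by (rule leaf_center_measurable)
  show "leaf_value g x S \<in> borel_measurable (cutsM d a b)"
    using assms(3) by (rule leaf_value_measurable)
  show "AE \<omega> in cutsM d a b. g (leaf_center \<omega> x S) = leaf_value g x S \<omega>"
    using AE_isolates[OF assms, of x] by eventually_elim (simp add: leaf_center_split)
qed

lemma norm1_nonneg: "norm1 d p \<ge> 0"
  unfolding norm1_def by (simp add: sum_nonneg)

lemma dist1_nonneg: "dist1 d x p \<ge> 0"
  unfolding dist1_def by (rule norm1_nonneg)

lemma dist1_pos:
  assumes "x \<in> pts d" "p \<in> pts d" "x \<noteq> p"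
  shows "dist1 d x p > 0"
proof -
  obtain i where i: "i < d" "x i \<noteq> p i"
    using assms pts_neq_iff by blast
  have "0 < \<bar>x i - p i\<bar>"
    using i by simp
  also have "\<dots> \<le> (\<Sum>j<d. \<bar>x j - p j\<bar>)"
    using i by (intro member_le_sum) auto
  finally show ?thesis
    unfolding dist1_def norm1_def by simp
qed

lemma norm1_rescale: "m > 0 \<Longrightarrow> norm1 d (rescale d x m p) = dist1 d x p / m"
  unfolding norm1_def dist1_def rescale_def
  by (simp add: sum_divide_distrib abs_minus_commute)

lemma expected_leaf_value_self:
  assumes "x \<in> S" "h x = 0"
  shows "expected_leaf_value d a b x S h = 0"
proof -
  have "leaf_value h x S \<omega> = 0" for \<omega>
  proof (cases "isolates \<omega> x S")
    case True
    then obtain n where "region_centers \<omega> x S n = {final_center \<omega> x S}"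
      by (rule isolatesE)
    then show ?thesis
      using self_in_region_centers[OF assms(1), of \<omega> n] assms(2) by (simp add: leaf_value_def)
  qed (simp add: leaf_value_def)
  then show ?thesis
    by (simp add: expected_leaf_value_def)
qed

lemma expected_leaf_value_mult:
  "expected_leaf_value d a b x S (\<lambda>q. m * h q) = m * expected_leaf_value d a b x S h"
proof -
  have "leaf_value (\<lambda>q. m * h q) x S = (\<lambda>\<omega>. m * leaf_value h x S \<omega>)"
    by (auto simp: leaf_value_def)
  then show ?thesis
    by (simp add: expected_leaf_value_def)
qed

lemma closest_point_value_le_alpha:
  assumes "0 < d" "a < b" "finite U" "U \<noteq> {}" "U \<subseteq> pts d" "Min (norm1 d ` U) = 1"
    "\<forall>p\<in>U. in_box d a b p" "in_box d a b (\<lambda>_. 0)"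
  shows "ereal (closest_point_value d a b U) \<le> alpha (card U)"
  unfolding alpha_def using assms by (intro SUP_upper2[where i = "(d, a, b, U)"]) auto

lemma closest_point_value_nonneg: "closest_point_value d a b U \<ge> 0"
  unfolding closest_point_value_def by (simp add: norm1_nonneg)

lemma in_box_rescale:
  assumes "m > 0" "in_box d a b p" "in_box d a b x"
  shows "in_box d (- ((b - a) / m)) ((b - a) / m) (rescale d x m p)"
  unfolding in_box_def
proof (intro allI impI)
  fix i assume "i < d"
  then have "- (b - a) \<le> p i - x i" "p i - x i \<le> b - a"
    using assms(2,3) unfolding in_box_def by fastforce+
  then show "- ((b - a) / m) \<le> rescale d x m p i \<and> rescale d x m p i \<le> (b - a) / m"
    unfolding rescale_def using \<open>i < d\<close> assms(1)
    by (auto simp: minus_divide_left intro: divide_right_mono)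
qed

lemma Min_norm1_rescale:
  assumes "finite U" "U \<noteq> {}" "m = Min (dist1 d x ` U)" "m > 0"
  shows "Min (norm1 d ` rescale d x m ` U) = 1"
proof -
  have "norm1 d ` rescale d x m ` U = (\<lambda>t. t / m) ` (dist1 d x ` U)"
    unfolding image_image using norm1_rescale[OF assms(4)] by simp
  also have "Min \<dots> = Min (dist1 d x ` U) / m"
    using assms(1,2,4) by (intro mono_Min_commute[symmetric]) (auto simp: mono_def divide_right_mono)
  finally show ?thesis
    using assms(3,4) by simp
qed

text \<open>The witness \<open>f\<close> is the value of the Closest Point Process on the centers translated by \<open>-x\<close>
  and scaled by the reciprocal of their minimal distance to \<open>x\<close>.\<close>

lemma expected_dist_outside_centers:
  assumes d: "0 < d" and ab: "a < b" and U: "finite U" "U \<noteq> {}" "U \<subseteq> pts d" "\<forall>p\<in>U. in_box d a b p"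
    and x: "x \<in> pts d" "in_box d a b x" "x \<notin> U"
  shows "\<exists>f. 0 \<le> f \<and> ereal f \<le> alpha (card U) \<and>
    expected_leaf_value d a b x U (dist1 d x) = Min (dist1 d x ` U) * f"
proof -
  define m where "m = Min (dist1 d x ` U)"
  have "\<forall>p\<in>U. dist1 d x p > 0"
    using U(3) x(1,3) by (auto intro!: dist1_pos)
  then have m: "m > 0"
    unfolding m_def using U(1,2) by simp
  define r where "r = (b - a) / m"
  define U' where "U' = rescale d x m ` U"
  have r: "- r < r" "in_box d (- r) r (\<lambda>_. 0)"
    unfolding r_def in_box_def using ab m by auto
  have box': "\<forall>p\<in>U. in_box d (- r) r (rescale d x m p)"
    unfolding r_def using U(4) x(2) m by (auto intro: in_box_rescale)
  have U': "finite U'" "U' \<noteq> {}" "U' \<subseteq> pts d" "\<forall>p\<in>U'. in_box d (- r) r p"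
    unfolding U'_def using U box' rescale_in_pts by auto
  have "card U' = card U"
    unfolding U'_def using inj_on_subset[OF inj_on_rescale[OF m] U(3)] by (rule card_image)
  moreover have "Min (norm1 d ` U') = 1"
    unfolding U'_def using U(1,2) m_def m by (rule Min_norm1_rescale)
  ultimately have "ereal (closest_point_value d (- r) r U') \<le> alpha (card U)"
    using closest_point_value_le_alpha[OF d r(1) U'(1-3) _ U'(4) r(2)] by simp
  moreover have "expected_leaf_value d a b x U (dist1 d x) =
      expected_leaf_value d (- r) r (\<lambda>_. 0) U' (\<lambda>q. m * norm1 d q)"
    unfolding U'_def using norm1_rescale[OF m] m
    by (intro expected_leaf_value_rescale[OF d ab r(1) m U box']) auto
  moreover have "closest_point_value d (- r) r U' = expected_leaf_value d (- r) r (\<lambda>_. 0) U' (norm1 d)"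
    unfolding closest_point_value_def using d r(1) U' by (rule integral_leaf_center)
  ultimately show ?thesis
    unfolding m_def using closest_point_value_nonneg expected_leaf_value_mult by metis
qed

lemma exists_point_outside:
  assumes "0 < d" "a < b" "finite U"
  obtains y where "y \<in> pts d" "in_box d a b y" "y \<notin> U"
proof -
  define f where "f = (\<lambda>c::real. \<lambda>i. if i < d then c else 0 :: real)"
  have "inj_on f {a..b}"
    using assms(1) by (intro inj_onI) (metis f_def)
  then have "infinite (f ` {a..b})"
    using assms(2) by (simp add: finite_image_iff)
  then obtain c where "c \<in> {a..b}" "f c \<notin> U"
    using assms(3) by (metis finite_subset subsetI imageE)
  then show ?thesis
    by (intro that[of "f c"]) (auto simp: f_def pts_def in_box_def)
qed

lemma alpha_nonneg:
  assumes "0 < d" "a < b" "finite U" "U \<noteq> {}" "U \<subseteq> pts d" "\<forall>p\<in>U. in_box d a b p"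
  shows "alpha (card U) \<ge> 0"
proof -
  obtain y where "y \<in> pts d" "in_box d a b y" "y \<notin> U"
    using assms(1-3) by (rule exists_point_outside)
  then obtain f where "0 \<le> f" "ereal f \<le> alpha (card U)"
    using expected_dist_outside_centers[OF assms] by blast
  then show ?thesis
    by (meson ereal_less_eq(5) order_trans)
qed

lemma expected_dist_leaf_center_le:
  assumes U: "0 < d" "a < b" "finite U" "U \<noteq> {}" "U \<subseteq> pts d" "\<forall>p\<in>U. in_box d a b p"
    and x: "x \<in> pts d" "in_box d a b x" and q: "q \<in> U"
  shows "ereal (expected_leaf_value d a b x U (dist1 d x)) \<le> alpha (card U) * ereal (dist1 d x q)"
proof (cases "x \<in> U")
  case True
  have "expected_leaf_value d a b x U (dist1 d x) = 0"
    using True by (rule expected_leaf_value_self) (simp add: dist1_def norm1_def)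
  then show ?thesis
    using alpha_nonneg[OF U] dist1_nonneg[of d x q] by (simp add: ereal_zero_le_0_iff zero_ereal_def[symmetric])
next
  case False
  then obtain f where f: "0 \<le> f" "ereal f \<le> alpha (card U)"
    and eq: "expected_leaf_value d a b x U (dist1 d x) = Min (dist1 d x ` U) * f"
    using expected_dist_outside_centers[OF U x] by blast
  have "0 \<le> Min (dist1 d x ` U)" "Min (dist1 d x ` U) \<le> dist1 d x q"
    using U(3,4) q by (auto simp: dist1_nonneg)
  then have "ereal f * ereal (Min (dist1 d x ` U)) \<le> alpha (card U) * ereal (dist1 d x q)"
    using f alpha_nonneg[OF U] by (intro ereal_mult_mono) auto
  then show ?thesis
    by (simp add: eq mult.commute)
qed

theorem expected_RT_cost_le:
  assumes "0 < d" "a < b" "finite X" "X \<subseteq> pts d" "finite U" "U \<noteq> {}" "U \<subseteq> pts d"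
    and box: "\<forall>x\<in>X \<union> U. in_box d a b x" and \<pi>: "\<forall>x\<in>X. \<pi> x \<in> U"
  shows "ereal (expected_RT_cost d a b U X) \<le> alpha (card U) * ereal (cost1 d \<pi> X)"
proof -
  have "expected_RT_cost d a b U X = (\<Sum>x\<in>X. \<integral>\<omega>. dist1 d x (leaf_center \<omega> x U) \<partial>cutsM d a b)"
    unfolding expected_RT_cost_def cost1_def
    using assms(1,2,5) by (intro Bochner_Integration.integral_sum integrable_leaf_center)
  also have "\<dots> = (\<Sum>x\<in>X. expected_leaf_value d a b x U (dist1 d x))"
    using assms box by (intro sum.cong integral_leaf_center) auto
  finally have "ereal (expected_RT_cost d a b U X) = (\<Sum>x\<in>X. ereal (expected_leaf_value d a b x U (dist1 d x)))"
    by simp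
  also have "\<dots> \<le> (\<Sum>x\<in>X. alpha (card U) * ereal (dist1 d x (\<pi> x)))"
    using assms box \<pi> by (intro sum_mono expected_dist_leaf_center_le) auto
  also have "\<dots> = alpha (card U) * ereal (cost1 d \<pi> X)"
    unfolding cost1_def by (simp add: sum_ereal_right_distrib[symmetric] dist1_nonneg)
  finally show ?thesis .
qed

section \<open>The threshold tree of a cut sequence\<close>

primrec tree_of_cuts :: "(nat \<Rightarrow> nat \<times> real) \<Rightarrow> nat \<Rightarrow> (nat \<Rightarrow> real) set \<Rightarrow> ttree" where
  "tree_of_cuts \<omega> 0 S = Leaf"
| "tree_of_cuts \<omega> (Suc n) S = (if separates (\<omega> 0) S
     then Node (fst (\<omega> 0)) (snd (\<omega> 0))
       (tree_of_cuts (\<lambda>k. \<omega> (Suc k)) n {p\<in>S. p (fst (\<omega> 0)) \<le> snd (\<omega> 0)})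
       (tree_of_cuts (\<lambda>k. \<omega> (Suc k)) n {p\<in>S. \<not> p (fst (\<omega> 0)) \<le> snd (\<omega> 0)})
     else tree_of_cuts (\<lambda>k. \<omega> (Suc k)) n S)"

lemma cuts_ok_tree_of_cuts: "\<forall>k. fst (\<omega> k) < d \<Longrightarrow> cuts_ok d (tree_of_cuts \<omega> n S)"
  by (induction n arbitrary: \<omega> S) auto

lemma region_centers_eq_if_same_leaf:
  "leaf_of (tree_of_cuts \<omega> n S) y = leaf_of (tree_of_cuts \<omega> n S) y' \<Longrightarrow>
   region_centers \<omega> y S n = region_centers \<omega> y' S n"
proof (induction n arbitrary: \<omega> S)
  case (Suc n)
  let ?\<omega> = "\<lambda>k. \<omega> (Suc k)" and ?i = "fst (\<omega> 0)" and ?\<theta> = "snd (\<omega> 0)"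
  show ?case
  proof (cases "separates (\<omega> 0) S")
    case True
    then have side: "(y ?i \<le> ?\<theta>) = (y' ?i \<le> ?\<theta>)"
      using Suc.prems by (auto split: if_splits)
    then have "refine (\<omega> 0) y S = refine (\<omega> 0) y' S"
      using True by (simp add: refine_separates)
    moreover have "region_centers ?\<omega> y (refine (\<omega> 0) y S) n = region_centers ?\<omega> y' (refine (\<omega> 0) y S) n"
      using Suc.prems True side by (intro Suc.IH) (cases "y ?i \<le> ?\<theta>"; simp add: refine_separates)
    ultimately show ?thesis
      unfolding region_centers_Suc_shift by simp
  next
    case False
    then show ?thesis
      using Suc.prems Suc.IH[of ?\<omega> S] unfolding region_centers_Suc_shift by (simp add: refine_not_separates)
  qed
qed simp

lemma leaves_tree_of_cuts:
  "finite S \<Longrightarrow> S \<noteq> {} \<Longrightarrow> \<forall>p\<in>S. region_centers \<omega> p S n = {p} \<Longrightarrow> leaves (tree_of_cuts \<omega> n S) = card S"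
proof (induction n arbitrary: \<omega> S)
  case 0
  then obtain p where "p \<in> S" "S = {p}"
    by auto
  then show ?case
    by simp
next
  case (Suc n)
  let ?\<omega> = "\<lambda>k. \<omega> (Suc k)" and ?i = "fst (\<omega> 0)" and ?\<theta> = "snd (\<omega> 0)"
  have isolated: "region_centers ?\<omega> p (refine (\<omega> 0) p S) n = {p}" if "p \<in> S" for p
    using Suc.prems(3) that unfolding region_centers_Suc_shift by simp
  show ?case
  proof (cases "separates (\<omega> 0) S")
    case True
    define L where "L = {p\<in>S. p ?i \<le> ?\<theta>}"
    define R where "R = {p\<in>S. \<not> p ?i \<le> ?\<theta>}"
    have "L \<noteq> {}" "R \<noteq> {}"
      using True unfolding L_def R_def separates_def by force+
    moreover have "\<forall>p\<in>L. region_centers ?\<omega> p L n = {p}"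
    proof
      fix p assume "p \<in> L"
      then have "p \<in> S" "refine (\<omega> 0) p S = L"
        using True unfolding L_def by (auto simp: refine_separates)
      then show "region_centers ?\<omega> p L n = {p}"
        using isolated by metis
    qed
    moreover have "\<forall>p\<in>R. region_centers ?\<omega> p R n = {p}"
    proof
      fix p assume "p \<in> R"
      then have "p \<in> S" "refine (\<omega> 0) p S = R"
        using True unfolding R_def by (auto simp: refine_separates)
      then show "region_centers ?\<omega> p R n = {p}"
        using isolated by metis
    qed
    moreover have "card S = card L + card R"
    proof -
      have "S = L \<union> R" "L \<inter> R = {}"
        unfolding L_def R_def by auto
      then show ?thesis
        using Suc.prems(1) card_Un_disjoint[of L R] by simp
    qed
    ultimately show ?thesis
      using Suc.prems(1) True Suc.IH[of L ?\<omega>] Suc.IH[of R ?\<omega>] by (simp add: L_def R_def)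
  next
    case False
    then show ?thesis
      using Suc isolated by (simp add: refine_not_separates)
  qed
qed

lemma tree_cost_le_cost1:
  assumes X: "finite X" and leaf: "\<forall>x\<in>X. \<forall>y\<in>X. leaf_of T x = leaf_of T y \<longrightarrow> c x = c y"
    and c: "\<forall>x\<in>X. c x \<in> pts d"
  shows "tree_cost d T X \<le> cost1 d c X"
proof -
  define cls where "cls = (\<lambda>x. {y\<in>X. leaf_of T y = leaf_of T x})"
  have "tree_cost d T X = (\<Sum>C\<in>cls ` X. Inf ((\<lambda>z. \<Sum>y\<in>C. dist1 d y z) ` pts d))"
    unfolding tree_cost_def cls_def ..
  also have "\<dots> \<le> (\<Sum>C\<in>cls ` X. \<Sum>y\<in>C. dist1 d y (c y))"
  proof (rule sum_mono)
    fix C assume "C \<in> cls ` X"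
    then obtain x where x: "x \<in> X" "C = cls x"
      by blast
    have "Inf ((\<lambda>z. \<Sum>y\<in>C. dist1 d y z) ` pts d) \<le> (\<Sum>y\<in>C. dist1 d y (c x))"
    proof (rule cInf_lower)
      show "bdd_below ((\<lambda>z. \<Sum>y\<in>C. dist1 d y z) ` pts d)"
        by (rule bdd_belowI[where m = 0]) (auto intro: sum_nonneg simp: dist1_nonneg)
      show "(\<Sum>y\<in>C. dist1 d y (c x)) \<in> (\<lambda>z. \<Sum>y\<in>C. dist1 d y z) ` pts d"
        using c x(1) by (intro imageI) simp
    qed
    also have "\<dots> = (\<Sum>y\<in>C. dist1 d y (c y))"
    proof (rule sum.cong)
      fix y assume "y \<in> C"
      then have "y \<in> X" "leaf_of T x = leaf_of T y"
        using x unfolding cls_def by auto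
      then have "c x = c y"
        using leaf[rule_format, OF x(1)] by blast
      then show "dist1 d y (c x) = dist1 d y (c y)"
        by simp
    qed simp
    finally show "Inf ((\<lambda>z. \<Sum>y\<in>C. dist1 d y z) ` pts d) \<le> (\<Sum>y\<in>C. dist1 d y (c y))" .
  qed
  also have "\<dots> = (\<Sum>y\<in>\<Union>(cls ` X). dist1 d y (c y))"
  proof (rule sum.Union_disjoint[symmetric, unfolded comp_def])
    show "\<forall>A\<in>cls ` X. finite A"
      using X by (simp add: cls_def)
    have "cls x = cls x'" if "z \<in> cls x" "z \<in> cls x'" for x x' z
      using that unfolding cls_def by auto
    then show "\<forall>A\<in>cls ` X. \<forall>B\<in>cls ` X. A \<noteq> B \<longrightarrow> A \<inter> B = {}"
      by blast
  qed
  also have "\<Union>(cls ` X) = X"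
    unfolding cls_def by blast
  finally show ?thesis
    unfolding cost1_def .
qed

lemma exists_tree_of_isolating_cuts:
  assumes \<omega>: "\<omega> \<in> space (cutsM d a b)" and U: "finite U" "U \<noteq> {}" "U \<subseteq> pts d"
    and isolated: "\<forall>p\<in>U. isolates \<omega> p U" and X: "finite X"
  obtains T where "cuts_ok d T" "leaves T = card U" "tree_cost d T X \<le> cost1 d (\<lambda>x. leaf_center \<omega> x U) X"
proof -
  have "\<exists>n. region_centers \<omega> p U n = {p}" if p: "p \<in> U" for p
  proof -
    obtain n where "region_centers \<omega> p U n = {final_center \<omega> p U}"
      by (rule isolatesE[OF isolated[rule_format, OF p]])
    moreover have "p \<in> region_centers \<omega> p U n"
      using p by (rule self_in_region_centers)
    ultimately show ?thesis
      by auto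
  qed
  then obtain n where n: "\<forall>p\<in>U. region_centers \<omega> p U (n p) = {p}"
    by metis
  define N where "N = Max (n ` U)"
  have isolated_N: "region_centers \<omega> p U N = {p}" if "p \<in> U" for p
    using n that U(1) region_centers_singleton_stable[of \<omega> p U "n p" p N] by (simp add: N_def)
  have leaf_center_N: "region_centers \<omega> z U N = {leaf_center \<omega> z U} \<and> leaf_center \<omega> z U \<in> U" for z
  proof -
    obtain p where p: "p \<in> region_centers \<omega> z U N"
      using region_centers_nonempty[OF U(2)] by blast
    then have "p \<in> U"
      using region_centers_subset by blast
    then have "region_centers \<omega> z U N = {p}"
      using region_centers_of_member[OF p] isolated_N by simp
    then show ?thesis
      using \<open>p \<in> U\<close> by (simp add: leaf_center_eq)
  qed
  define T where "T = tree_of_cuts \<omega> N U"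
  have "cuts_ok d T"
    using \<omega> unfolding T_def space_cutsM by (intro cuts_ok_tree_of_cuts) (auto simp: mem_Times_iff)
  moreover have "leaves T = card U"
    unfolding T_def using U(1,2) isolated_N by (intro leaves_tree_of_cuts) auto
  moreover have "tree_cost d T X \<le> cost1 d (\<lambda>x. leaf_center \<omega> x U) X"
  proof (rule tree_cost_le_cost1[OF X])
    have "leaf_center \<omega> x U = leaf_center \<omega> y U" if "leaf_of T x = leaf_of T y" for x y
      using region_centers_eq_if_same_leaf[OF that[unfolded T_def]] leaf_center_N[of x] leaf_center_N[of y]
      by simp
    then show "\<forall>x\<in>X. \<forall>y\<in>X. leaf_of T x = leaf_of T y \<longrightarrow> leaf_center \<omega> x U = leaf_center \<omega> y U"
      by blast
    show "\<forall>x\<in>X. leaf_center \<omega> x U \<in> pts d"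
      using leaf_center_N U(3) by blast
  qed
  ultimately show ?thesis
    using that by blast
qed

lemma (in prob_space) exists_le_expectation:
  fixes Y :: "'a \<Rightarrow> real"
  assumes "integrable M Y" "AE \<omega> in M. P \<omega>"
  shows "\<exists>\<omega>\<in>space M. P \<omega> \<and> Y \<omega> \<le> expectation Y"
proof (rule ccontr)
  assume contra: "\<not> ?thesis"
  from assms(2) AE_space have "AE \<omega> in M. expectation Y < Y \<omega>"
    by eventually_elim (use contra in force)
  then have "expectation Y < expectation Y"
    by (rule expectation_greater[OF assms(1)])
  then show False
    by simp
qed

lemma exists_box:
  assumes "finite P"
  obtains a b :: real where "a < b" "\<forall>p\<in>P. in_box d a b p"
proof -
  define r where "r = (\<Sum>p\<in>P. \<Sum>i<d. \<bar>p i\<bar>) + 1"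
  have "\<bar>p i\<bar> \<le> r" if "p \<in> P" "i < d" for p i
  proof -
    have "\<bar>p i\<bar> \<le> (\<Sum>i<d. \<bar>p i\<bar>)"
      using that(2) by (intro member_le_sum) auto
    also have "\<dots> \<le> (\<Sum>p\<in>P. \<Sum>i<d. \<bar>p i\<bar>)"
      using that(1) assms by (intro member_le_sum[of p P "\<lambda>p. \<Sum>i<d. \<bar>p i\<bar>"] sum_nonneg) auto
    finally show ?thesis
      unfolding r_def by simp
  qed
  then have "\<forall>p\<in>P. in_box d (- r) r p"
    unfolding in_box_def by (simp add: abs_le_iff minus_le_iff)
  moreover have "0 \<le> (\<Sum>p\<in>P. \<Sum>i<d. \<bar>p i\<bar>)"
    by (intro sum_nonneg) auto
  then have "- r < r"
    unfolding r_def by linarith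
  ultimately show ?thesis
    using that by blast
qed

theorem exists_tree_cost_le:
  assumes d: "0 < d" and X: "finite X" "X \<subseteq> pts d" and U: "finite U" "U \<noteq> {}" "U \<subseteq> pts d"
  obtains T where "cuts_ok d T" "leaves T = card U"
    "ereal (tree_cost d T X) \<le> alpha (card U) * ereal (\<Sum>x\<in>X. Min (dist1 d x ` U))"
proof -
  have "finite (X \<union> U)"
    using X(1) U(1) by simp
  then obtain a b where ab: "a < b" and box: "\<forall>p\<in>X \<union> U. in_box d a b p"
    by (rule exists_box)
  interpret prob_space "cutsM d a b"
    using d ab by (rule prob_space_cutsM)
  define \<pi> where "\<pi> = (\<lambda>x. SOME q. q \<in> U \<and> dist1 d x q = Min (dist1 d x ` U))"
  have \<pi>: "\<pi> x \<in> U \<and> dist1 d x (\<pi> x) = Min (dist1 d x ` U)" for x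
  proof -
    have "Min (dist1 d x ` U) \<in> dist1 d x ` U"
      using U(1,2) by (intro Min_in) auto
    then have "\<exists>q. q \<in> U \<and> dist1 d x q = Min (dist1 d x ` U)"
      by auto
    then show ?thesis
      unfolding \<pi>_def by (rule someI_ex)
  qed
  have AE: "AE \<omega> in cutsM d a b. \<forall>p\<in>U. isolates \<omega> p U"
    using U box by (intro AE_finite_allI AE_isolates d ab) auto
  have integrable: "integrable (cutsM d a b) (\<lambda>\<omega>. cost1 d (\<lambda>x. leaf_center \<omega> x U) X)"
    unfolding cost1_def using d ab U(1) by (intro Bochner_Integration.integrable_sum integrable_leaf_center)
  obtain \<omega> where \<omega>: "\<omega> \<in> space (cutsM d a b)" "\<forall>p\<in>U. isolates \<omega> p U"
    and le: "cost1 d (\<lambda>x. leaf_center \<omega> x U) X \<le> expected_RT_cost d a b U X"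
    using exists_le_expectation[OF integrable AE] unfolding expected_RT_cost_def by blast
  obtain T where T: "cuts_ok d T" "leaves T = card U" "tree_cost d T X \<le> cost1 d (\<lambda>x. leaf_center \<omega> x U) X"
    using exists_tree_of_isolating_cuts[OF \<omega>(1) U \<omega>(2) X(1)] .
  have "ereal (tree_cost d T X) \<le> ereal (expected_RT_cost d a b U X)"
    using T(3) le by simp
  also have "\<dots> \<le> alpha (card U) * ereal (cost1 d \<pi> X)"
    using d ab X U box \<pi> by (intro expected_RT_cost_le) auto
  also have "cost1 d \<pi> X = (\<Sum>x\<in>X. Min (dist1 d x ` U))"
    unfolding cost1_def using \<pi> by simp
  finally show ?thesis
    using T(1,2) that by blast
qed

section \<open>The price of explainability\<close>

text \<open>With the conventions of \<^typ>\<open>ereal\<close> division, \<open>0 / 0 = 0\<close>, so a vanishing optimum is harmless.\<close>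

lemma ereal_divide_Inf_le:
  fixes I \<alpha> :: ereal and C :: "real set"
  assumes C: "C \<noteq> {}" "\<forall>c\<in>C. 0 \<le> c" and nonneg: "0 \<le> I" "0 \<le> \<alpha>"
    and le: "\<forall>c\<in>C. I \<le> \<alpha> * ereal c"
  shows "I / ereal (Inf C) \<le> \<alpha>"
proof (cases \<alpha>)
  case (real r)
  obtain c0 where "c0 \<in> C"
    using C(1) by blast
  then obtain i where i: "I = ereal i" "0 \<le> i"
    using le nonneg real by (cases I) auto
  have ic: "i \<le> r * c" if "c \<in> C" for c
    using le that by (simp add: i real)
  have "i \<le> r * Inf C"
  proof (cases "r = 0")
    case True
    then show ?thesis
      using ic[OF \<open>c0 \<in> C\<close>] by simp
  next
    case False
    then have "r > 0"
      using nonneg(2) real by simp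
    then have "i / r \<le> Inf C"
      using C ic by (intro cInf_greatest) (auto simp: divide_le_eq mult.commute)
    then show ?thesis
      using \<open>r > 0\<close> by (simp add: divide_le_eq mult.commute)
  qed
  moreover have "0 \<le> Inf C"
    using C by (intro cInf_greatest) auto
  ultimately show ?thesis
    using i real nonneg(2) by (cases "Inf C = 0") (auto simp: divide_le_eq mult.commute)
qed (use nonneg in auto)

lemma exists_centers:
  assumes "0 < d"
  obtains U where "U \<subseteq> pts d" "finite U" "card U = k"
proof -
  define f where "f = (\<lambda>j::nat. \<lambda>i::nat. if i = 0 then real j else 0)"
  have "inj_on f {..<k}"
    by (intro inj_onI) (metis f_def of_nat_eq_iff)
  moreover have "f ` {..<k} \<subseteq> pts d"
    unfolding f_def pts_def using assms by auto
  ultimately show ?thesis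
    using that[of "f ` {..<k}"] by (simp add: card_image)
qed

lemma tree_cost_nonneg: "tree_cost d T X \<ge> 0"
  unfolding tree_cost_def
proof (intro sum_nonneg cInf_greatest)
  show "(\<lambda>c. \<Sum>y\<in>C. dist1 d y c) ` pts d \<noteq> {}" for C
    unfolding pts_def by blast
qed (auto intro!: sum_nonneg simp: dist1_nonneg)

theorem price_of_explainability_le_alpha:
  assumes k: "1 \<le> k"
  shows "price_of_explainability k \<le> alpha k"
  unfolding price_of_explainability_def
proof (intro SUP_least, clarify)
  fix d X assume d: "0 < d" and X: "finite X" "X \<subseteq> pts d"
  define C where "C = {(\<Sum>x\<in>X. Min (dist1 d x ` U)) | U. U \<subseteq> pts d \<and> finite U \<and> card U = k}"
  define I where "I = (INF T \<in> {T. cuts_ok d T \<and> leaves T = k}. ereal (tree_cost d T X))"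
  obtain U0 where U0: "U0 \<subseteq> pts d" "finite U0" "card U0 = k"
    using d by (rule exists_centers)
  then obtain a b where "a < b" "\<forall>p\<in>U0. in_box d a b p"
    by (meson exists_box)
  then have alpha: "0 \<le> alpha k"
    using alpha_nonneg[OF d _ U0(2) _ U0(1)] U0 k by fastforce
  have C_ne: "C \<noteq> {}"
    unfolding C_def using U0 by blast
  have Min_nonneg: "0 \<le> Min (dist1 d x ` U)" if "finite U" "card U = k" for x U
    using that k by (subst Min_ge_iff) (auto simp: dist1_nonneg)
  have C_nonneg: "\<forall>c\<in>C. 0 \<le> c"
    unfolding C_def using Min_nonneg by (auto intro!: sum_nonneg)
  have I_nonneg: "0 \<le> I"
    unfolding I_def by (intro INF_greatest) (simp add: tree_cost_nonneg)
  have I_le: "\<forall>c\<in>C. I \<le> alpha k * ereal c"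
  proof
    fix c assume "c \<in> C"
    then obtain U where U: "U \<subseteq> pts d" "finite U" "card U = k" "c = (\<Sum>x\<in>X. Min (dist1 d x ` U))"
      unfolding C_def by blast
    moreover have "U \<noteq> {}"
      using U(3) k by auto
    then obtain T where "cuts_ok d T" "leaves T = card U"
        "ereal (tree_cost d T X) \<le> alpha (card U) * ereal (\<Sum>x\<in>X. Min (dist1 d x ` U))"
      by (rule exists_tree_cost_le[OF d X U(2) _ U(1)])
    ultimately show "I \<le> alpha k * ereal c"
      unfolding I_def by (intro INF_lower2[where i = T]) auto
  qed
  have "I / ereal (Inf C) \<le> alpha k"
    using C_ne C_nonneg I_nonneg alpha I_le by (rule ereal_divide_Inf_le)
  then show "I / ereal (kmed_opt d k X) \<le> alpha k"
    by (simp add: kmed_opt_def C_def)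
qed

theorem lemma2p2:
  shows "(\<forall>d a b X U \<pi>. 0 < d \<and> a < b \<and> finite X \<and> X \<subseteq> pts d \<and>
            finite U \<and> U \<noteq> {} \<and> U \<subseteq> pts d \<and>
            (\<forall>x\<in>X \<union> U. in_box d a b x) \<and> (\<forall>x\<in>X. \<pi> x \<in> U) \<longrightarrow>
            ereal (expected_RT_cost d a b U X) \<le> alpha (card U) * ereal (cost1 d \<pi> X))
       \<and> (\<forall>k\<ge>1. price_of_explainability k \<le> alpha k)"
  using expected_RT_cost_le price_of_explainability_le_alpha by blast

end
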